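(* Let a domain $v$ be a triple $(\mu^{(v)}, f^{(v)}, g^{(v)})$ with $\mu^{(v)}$ a distribution on inputs $\bm{x}\in\mathbb{R}^d$, $f^{(v)}:\mathbb{R}^d\to\mathbb{R}^{d'}$ ($d'\le d$) a representation function and $g^{(v)}:\mathbb{R}^{d'}\to\mathcal{Y}$ a stochastic labeling function; write $h^{(v)}=g^{(v)}\circ f^{(v)}$. Let $u$ be the unseen domain and $s$ a seen domain. For a hypothesis $h=g\circ f$ with $f:\mathbb{R}^d\to\mathbb{R}^{d'}$, $g:\mathbb{R}^{d'}\to\mathcal{Y}$, define the risk $R^{(v)}(h):=\mathbb{E}_{\bm{x}\sim\mu^{(v)}}[\ell(h(\bm{x}),h^{(v)}(\bm{x}))]$. Assume (i) the loss $\ell(\cdot,\cdot)$ is non-negative, symmetric, bounded by a finite positive number $L$, and satisfies the triangle inequality; and (ii) the representation function $f$ is invertible when restricted to the (intrinsically low-dimensional) data manifold, i.e. on the support of the input distributions. Then for any such hypothesis $h=g\circ f$, \[ R^{(u)}(h)\le R^{(s)}(h)+L\,\|f_{\#}\mu^{(u)}-f_{\#}\mu^{(s)}\|_1+\sigma^{(u,s)}, \] where $f_{\#}\mu^{(v)}$ is the pushforward of $\mu^{(v)}$ under $f$ (the distribution of $f(\bm{x})$ with $\bm{x}\sim\mu^{(v)}$), $\|f_{\#}\mu^{(u)}-f_{\#}\mu^{(s)}\|_1=\int|f_{\#}\mu^{(u)}-f_{\#}\mu^{(s)}|\,d\bm{x}$ is the $L^1$ distance between the pushforwards, and \[ \sigma^{(u,s)}:=\min\Big\{\mathbb{E}_{\bm{x}\sim\mu^{(u)}}[\ell(h^{(u)}(\bm{x}),h^{(s)}(\bm{x}))],\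 \mathbb{E}_{\bm{x}\sim\mu^{(s)}}[\ell(h^{(u)}(\bm{x}),h^{(s)}(\bm{x}))]\Big\}. \]
   Context: Domain generalization setting with one unseen domain $u$ and seen domains. $\sigma^{(u,s)}$ does not depend on the learned hypothesis $h$. The invertibility of $f$ is used to rewrite expectations over $\bm{x}$ as expectations over $\bm{z}=f(\bm{x})$ via $\bm{x}=f^{-1}(\bm{z})$. *)

theory Defs
  imports "HOL-Probability.Probability"
begin

definition risk :: "'a measure \<Rightarrow> ('y \<Rightarrow> 'y \<Rightarrow> real) \<Rightarrow> ('a \<Rightarrow> 'y) \<Rightarrow> ('a \<Rightarrow> 'y) \<Rightarrow> real" where
  "risk \<mu> loss hv h = (\<integral>x. loss (h x) (hv x) \<partial>\<mu>)"

definition sigma_us :: "'a measure \<Rightarrow> 'a measure \<Rightarrow> ('y \<Rightarrow> 'y \<Rightarrow> real) \<Rightarrow> ('a \<Rightarrow> 'y) \<Rightarrow> ('a \<Rightarrow> 'y) \<Rightarrow> real" where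
  "sigma_us \<mu>u \<mu>s loss hu hs =
     min (\<integral>x. loss (hu x) (hs x) \<partial>\<mu>u) (\<integral>x. loss (hu x) (hs x) \<partial>\<mu>s)"

definition l1_dist :: "('b::euclidean_space \<Rightarrow> real) \<Rightarrow> ('b \<Rightarrow> real) \<Rightarrow> real" where
  "l1_dist p q = (\<integral>z. \<bar>p z - q z\<bar> \<partial>lborel)"

definition pushforward_density :: "'a measure \<Rightarrow> ('a \<Rightarrow> 'b::euclidean_space) \<Rightarrow> ('b \<Rightarrow> real) \<Rightarrow> bool" where
  "pushforward_density \<mu> f p \<longleftrightarrow>
     p \<in> borel_measurable borel \<and> (\<forall>z. 0 \<le> p z) \<and>
     distr \<mu> borel f = density lborel (\<lambda>z. ennreal (p z))"

end

theory Submission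
  imports Defs
begin

text \<open>On the support S the true labeler hv agrees with hv \<circ> finv \<circ> f, so the pointwise
  loss of g \<circ> f against hv factors through f as \<psi> \<circ> f with 0 \<le> \<psi> \<le> L. Its expectations
  under the two input distributions are therefore integrals of \<psi> against the two pushforward
  densities, and differ by at most L times their L1 distance. Combining this with the triangle
  inequality loss(h, hu) \<le> loss(h, hs) + loss(hu, hs), integrated either before or after the
  change of domain, gives the bound with either term of the minimum defining sigma_us.\<close>

lemma integral_pushforward_density:
  fixes f :: "'a::topological_space \<Rightarrow> 'b::euclidean_space" and \<psi> :: "'b \<Rightarrow> real"
  assumes sets_M: "sets M = sets borel" and p: "pushforward_density M f p"
    and f_meas: "f \<in> borel_measurable borel" and \<psi>_meas: "\<psi> \<in> borel_measurable borel"
  shows "(\<integral>x. \<psi> (f x) \<partial>M) = (\<integral>z. p z * \<psi> z \<partial>lborel)"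
proof -
  have "f \<in> borel_measurable M" using f_meas by (simp add: measurable_cong_sets[OF sets_M refl])
  then have "(\<integral>x. \<psi> (f x) \<partial>M) = (\<integral>z. \<psi> z \<partial>distr M borel f)"
    using \<psi>_meas by (simp add: integral_distr)
  also have "\<dots> = (\<integral>z. \<psi> z \<partial>density lborel (\<lambda>z. ennreal (p z)))"
    using p unfolding pushforward_density_def by simp
  also have "\<dots> = (\<integral>z. p z * \<psi> z \<partial>lborel)"
    using p \<psi>_meas unfolding pushforward_density_def by (simp add: integral_density)
  finally show ?thesis .
qed

lemma integrable_pushforward_density:
  fixes f :: "'a::topological_space \<Rightarrow> 'b::euclidean_space" and \<psi> :: "'b \<Rightarrow> real"
  assumes M: "prob_space M" and sets_M: "sets M = sets borel" and p: "pushforward_density M f p"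
    and f_meas: "f \<in> borel_measurable borel" and \<psi>_meas: "\<psi> \<in> borel_measurable borel"
    and \<psi>_bdd: "\<And>z. \<bar>\<psi> z\<bar> \<le> B"
  shows "integrable lborel (\<lambda>z. p z * \<psi> z)"
proof -
  have "f \<in> borel_measurable M" using f_meas by (simp add: measurable_cong_sets[OF sets_M refl])
  then have "prob_space (distr M borel f)" by (rule prob_space.prob_space_distr[OF M])
  then have "finite_measure (density lborel (\<lambda>z. ennreal (p z)))"
    using p unfolding pushforward_density_def by (simp add: prob_space.finite_measure)
  then have "integrable (density lborel (\<lambda>z. ennreal (p z))) \<psi>"
    using \<psi>_meas \<psi>_bdd by (intro finite_measure.integrable_const_bound[where B=B]) auto
  then show ?thesis
    using p \<psi>_meas unfolding pushforward_density_def by (simp add: integrable_density)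
qed

lemma integral_pushforward_le_plus_l1_dist:
  fixes f :: "'a::topological_space \<Rightarrow> 'b::euclidean_space" and \<psi> :: "'b \<Rightarrow> real"
  assumes M1: "prob_space M1" "sets M1 = sets borel" "pushforward_density M1 f p1"
    and M2: "prob_space M2" "sets M2 = sets borel" "pushforward_density M2 f p2"
    and f_meas: "f \<in> borel_measurable borel" and \<psi>_meas: "\<psi> \<in> borel_measurable borel"
    and \<psi>_nonneg: "\<And>z. 0 \<le> \<psi> z" and \<psi>_bdd: "\<And>z. \<psi> z \<le> L"
  shows "(\<integral>x. \<psi> (f x) \<partial>M1) \<le> (\<integral>x. \<psi> (f x) \<partial>M2) + L * l1_dist p1 p2"
proof -
  have \<psi>_abs: "\<And>z. \<bar>\<psi> z\<bar> \<le> L" using \<psi>_nonneg \<psi>_bdd by (simp add: abs_le_iff)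
  have int1: "integrable lborel (\<lambda>z. p1 z * \<psi> z)"
    using integrable_pushforward_density[OF M1 f_meas \<psi>_meas \<psi>_abs] .
  have int2: "integrable lborel (\<lambda>z. p2 z * \<psi> z)"
    using integrable_pushforward_density[OF M2 f_meas \<psi>_meas \<psi>_abs] .
  have "integrable lborel (\<lambda>z. p1 z * 1)" "integrable lborel (\<lambda>z. p2 z * 1)"
    using integrable_pushforward_density[OF M1 f_meas, of "\<lambda>_. 1" 1]
      integrable_pushforward_density[OF M2 f_meas, of "\<lambda>_. 1" 1] by auto
  then have int_diff: "integrable lborel (\<lambda>z. L * \<bar>p1 z - p2 z\<bar>)" by simp
  have "(\<integral>x. \<psi> (f x) \<partial>M1) - (\<integral>x. \<psi> (f x) \<partial>M2) = (\<integral>z. (p1 z - p2 z) * \<psi> z \<partial>lborel)"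
    using integral_pushforward_density[OF M1(2,3) f_meas \<psi>_meas]
      integral_pushforward_density[OF M2(2,3) f_meas \<psi>_meas] int1 int2
    by (simp add: left_diff_distrib)
  also have "\<dots> \<le> (\<integral>z. L * \<bar>p1 z - p2 z\<bar> \<partial>lborel)"
  proof (rule integral_mono[OF _ int_diff])
    show "integrable lborel (\<lambda>z. (p1 z - p2 z) * \<psi> z)"
      using int1 int2 by (simp add: left_diff_distrib)
    fix z
    have "(p1 z - p2 z) * \<psi> z \<le> \<bar>p1 z - p2 z\<bar> * \<psi> z"
      using \<psi>_nonneg[of z] by (intro mult_right_mono) auto
    also have "\<dots> \<le> \<bar>p1 z - p2 z\<bar> * L"
      using \<psi>_bdd[of z] by (intro mult_left_mono) auto
    finally show "(p1 z - p2 z) * \<psi> z \<le> L * \<bar>p1 z - p2 z\<bar>" by (simp add: mult.commute)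
  qed
  also have "\<dots> = L * l1_dist p1 p2" unfolding l1_dist_def by simp
  finally show ?thesis by simp
qed

lemma AE_in_set_of_emeasure_1:
  assumes "prob_space M" and "emeasure M S = 1"
  shows "AE x in M. x \<in> S"
  using assms by (intro prob_space.AE_prob_1) (simp_all add: measure_def)

lemma risk_le_risk_plus_l1_dist:
  fixes M1 M2 :: "'a::topological_space measure" and f :: "'a \<Rightarrow> 'b::euclidean_space"
    and loss :: "'y \<Rightarrow> 'y \<Rightarrow> real"
  assumes M1: "prob_space M1" "sets M1 = sets borel" "pushforward_density M1 f p1"
    and M2: "prob_space M2" "sets M2 = sets borel" "pushforward_density M2 f p2"
    and f_meas: "f \<in> borel_measurable borel" and g_meas: "g \<in> measurable borel Y"
    and hv_meas: "hv \<in> measurable borel Y"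
    and loss_meas: "(\<lambda>(a, b). loss a b) \<in> borel_measurable (Y \<Otimes>\<^sub>M Y)"
    and loss_nonneg: "\<And>a b. 0 \<le> loss a b" and loss_bdd: "\<And>a b. loss a b \<le> L"
    and S1: "emeasure M1 S = 1" and S2: "emeasure M2 S = 1"
    and finv_meas: "finv \<in> borel_measurable borel"
    and finv_inv: "\<And>x. x \<in> S \<Longrightarrow> finv (f x) = x"
  shows "risk M1 loss hv (g \<circ> f) \<le> risk M2 loss hv (g \<circ> f) + L * l1_dist p1 p2"
proof -
  define \<psi> where "\<psi> z = loss (g z) (hv (finv z))" for z
  have \<psi>_meas: "\<psi> \<in> borel_measurable borel"
    unfolding \<psi>_def using loss_meas g_meas measurable_comp[OF finv_meas hv_meas]
    by (intro measurable_Pair_compose_split[where f = loss]) (auto simp: o_def)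
  have risk_meas: "(\<lambda>x. loss ((g \<circ> f) x) (hv x)) \<in> borel_measurable borel"
    using loss_meas measurable_comp[OF f_meas g_meas] hv_meas
    by (rule measurable_Pair_compose_split)
  have risk_eq: "risk M loss hv (g \<circ> f) = (\<integral>x. \<psi> (f x) \<partial>M)"
    if "prob_space M" "sets M = sets borel" "emeasure M S = 1" for M
  proof -
    have "(\<lambda>x. \<psi> (f x)) \<in> borel_measurable borel"
      using measurable_comp[OF f_meas \<psi>_meas] by (simp add: o_def)
    moreover have "AE x in M. loss ((g \<circ> f) x) (hv x) = \<psi> (f x)"
      using AE_in_set_of_emeasure_1[OF that(1,3)] by eventually_elim (simp add: \<psi>_def finv_inv)
    ultimately show ?thesis
      unfolding risk_def using risk_meas
      by (intro integral_cong_AE) (simp_all add: measurable_cong_sets[OF that(2) refl])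
  qed
  show ?thesis
    using risk_eq[OF M1(1,2) S1] risk_eq[OF M2(1,2) S2]
      integral_pushforward_le_plus_l1_dist[OF M1 M2 f_meas \<psi>_meas]
    by (simp add: \<psi>_def loss_nonneg loss_bdd)
qed

lemma integrable_bounded_loss:
  fixes loss :: "'y \<Rightarrow> 'y \<Rightarrow> real"
  assumes "finite_measure M" and "(\<lambda>(a, b). loss a b) \<in> borel_measurable (Y \<Otimes>\<^sub>M Y)"
    and "a \<in> measurable M Y" "b \<in> measurable M Y" and "\<And>a b. \<bar>loss a b\<bar> \<le> L"
  shows "integrable M (\<lambda>x. loss (a x) (b x))"
  using assms measurable_Pair_compose_split[OF assms(2-4)]
  by (intro finite_measure.integrable_const_bound[where B=L]) auto

lemma risk_triangle:
  fixes loss :: "'y \<Rightarrow> 'y \<Rightarrow> real"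
  assumes M: "finite_measure M"
    and loss_meas: "(\<lambda>(a, b). loss a b) \<in> borel_measurable (Y \<Otimes>\<^sub>M Y)"
    and h: "h \<in> measurable M Y" and hu: "hu \<in> measurable M Y" and hs: "hs \<in> measurable M Y"
    and loss_bdd: "\<And>a b. \<bar>loss a b\<bar> \<le> L"
    and loss_sym: "\<And>a b. loss a b = loss b a"
    and loss_tri: "\<And>a b c. loss a c \<le> loss a b + loss b c"
  shows "risk M loss hu h \<le> risk M loss hs h + (\<integral>x. loss (hu x) (hs x) \<partial>M)"
proof -
  note integrable = integrable_bounded_loss[OF M loss_meas _ _ loss_bdd]
  have "risk M loss hu h \<le> (\<integral>x. loss (h x) (hs x) + loss (hu x) (hs x) \<partial>M)"
    unfolding risk_def
  proof (rule integral_mono)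
    fix x
    show "loss (h x) (hu x) \<le> loss (h x) (hs x) + loss (hu x) (hs x)"
      using loss_tri[where a="h x" and b="hs x" and c="hu x"] loss_sym[of "hs x" "hu x"] by simp
  qed (use integrable[OF h hu] integrable[OF h hs] integrable[OF hu hs] in simp_all)
  also have "\<dots> = risk M loss hs h + (\<integral>x. loss (hu x) (hs x) \<partial>M)"
    unfolding risk_def using integrable[OF h hs] integrable[OF hu hs] by simp
  finally show ?thesis .
qed

theorem lemma1:
  fixes \<mu>u \<mu>s :: "'a::euclidean_space measure"
    and Y :: "'y measure"
    and f :: "'a \<Rightarrow> 'b::euclidean_space" and g :: "'b \<Rightarrow> 'y"
    and hu hs :: "'a \<Rightarrow> 'y"
    and loss :: "'y \<Rightarrow> 'y \<Rightarrow> real" and L :: real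
    and pu ps :: "'b \<Rightarrow> real"
  assumes dim: "DIM('b) \<le> DIM('a)"
    and prob_u: "prob_space \<mu>u" and sets_u: "sets \<mu>u = sets borel"
    and prob_s: "prob_space \<mu>s" and sets_s: "sets \<mu>s = sets borel"
    and hu_meas: "hu \<in> measurable borel Y" and hs_meas: "hs \<in> measurable borel Y"
    and f_meas: "f \<in> borel_measurable borel" and g_meas: "g \<in> measurable borel Y"
    and loss_meas: "(\<lambda>(a, b). loss a b) \<in> borel_measurable (Y \<Otimes>\<^sub>M Y)"
    and loss_nonneg: "\<And>a b. 0 \<le> loss a b"
    and loss_sym: "\<And>a b. loss a b = loss b a"
    and L_pos: "0 < L"
    and loss_bdd: "\<And>a b. loss a b \<le> L"
    and loss_tri: "\<And>a b c. loss a c \<le> loss a b + loss b c"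
    and S_meas: "S \<in> sets borel"
    and S_u: "emeasure \<mu>u S = 1" and S_s: "emeasure \<mu>s S = 1"
    and finv_meas: "finv \<in> borel_measurable borel"
    and finv_inv: "\<And>x. x \<in> S \<Longrightarrow> finv (f x) = x"
    and pu: "pushforward_density \<mu>u f pu"
    and ps: "pushforward_density \<mu>s f ps"
  shows "risk \<mu>u loss hu (g \<circ> f)
           \<le> risk \<mu>s loss hs (g \<circ> f) + L * l1_dist pu ps + sigma_us \<mu>u \<mu>s loss hu hs"
proof -
  have loss_abs: "\<And>a b. \<bar>loss a b\<bar> \<le> L" using loss_nonneg loss_bdd by (simp add: abs_le_iff)
  have triangle: "risk M loss hu (g \<circ> f) \<le> risk M loss hs (g \<circ> f) + (\<integral>x. loss (hu x) (hs x) \<partial>M)"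
    if "prob_space M" "sets M = sets borel" for M
    using measurable_comp[OF f_meas g_meas] hu_meas hs_meas prob_space.finite_measure[OF that(1)]
    by (intro risk_triangle[OF _ loss_meas _ _ _ loss_abs loss_sym loss_tri])
      (simp_all add: measurable_cong_sets[OF that(2) refl])
  have transfer: "risk \<mu>u loss hv (g \<circ> f) \<le> risk \<mu>s loss hv (g \<circ> f) + L * l1_dist pu ps"
    if "hv \<in> measurable borel Y" for hv
    using risk_le_risk_plus_l1_dist[OF prob_u sets_u pu prob_s sets_s ps f_meas g_meas that
        loss_meas loss_nonneg loss_bdd S_u S_s finv_meas finv_inv] .
  show ?thesis
    using triangle[OF prob_u sets_u] transfer[OF hs_meas]
      transfer[OF hu_meas] triangle[OF prob_s sets_s]
    unfolding sigma_us_def by linarith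
qed

end
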